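(* Let $\mathcal{T}$ be a finite or countably infinite set, let $\prec$ be a strict total order on $\mathcal{T}$, let $\mathbf{p},\mathbf{q}$ be probability distributions on $\mathcal{T}$, and let $m$ be a positive integer. Let $X_0 \sim \mathbf{q}$, $X_1,\dots,X_m \sim^{\mathrm{iid}} \mathbf{p}$, $U_0,\dots,U_m \sim^{\mathrm{iid}} \mathrm{Uniform}(0,1)$ be mutually independent, and let $R = \sum_{j=1}^m \big(\mathbb{I}[X_j \prec X_0] + \mathbb{I}[X_j = X_0, U_j < U_0]\big)$. For $x \in \mathcal{T}$ let $\tilde{\mathbf{p}}(x) = \sum_{x' \prec x} \mathbf{p}(x')$. Then for $0 \le r \le m$, $$\Pr[R = r] = \sum_{x\in\mathcal{T}} H(x,m,r)\,\mathbf{q}(x),$$ where $H(x,m,r)$ is defined as follows. If $0 < \mathbf{p}(x) < 1$, writing $\rho(x) = \tilde{\mathbf{p}}(x)/(1-\mathbf{p}(x))$, $$H(x,m,r) = \sum_{e=0}^m \left\{ \left[ \sum_{j=0}^{e} \binom{m-e}{r-j} \rho(x)^{r-j} \big(1-\rho(x)\big)^{(m-e)-(r-j)} \frac{1}{e+1} \right] \binom{m}{e} \mathbf{p}(x)^e (1-\mathbf{p}(x))^{m-e} \right\};$$ if $\mathbf{p}(x) = 0$, $H(x,m,r) = \binom{m}{r}\tilde{\mathbf{p}}(x)^r (1-\tilde{\mathbf{p}}(x))^{m-r}$; and if $\mathbf{p}(x) = 1$, $H(x,m,r) = \frac{1}{m+1}$.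
   Context: $\mathbb{I}[\cdot]$ denotes the indicator of an event. Conventions: $\binom{n}{k} = 0$ when $k<0$ or $k>n$, and $0^0 = 1$. *)

theory Defs
  imports "HOL-Probability.Probability"
begin

definition ptilde :: "('a \<times> 'a) set \<Rightarrow> 'a pmf \<Rightarrow> 'a \<Rightarrow> real" where
  "ptilde lt p x = (\<Sum>\<^sub>\<infinity>y\<in>{y. (y, x) \<in> lt}. pmf p y)"

definition rho :: "('a \<times> 'a) set \<Rightarrow> 'a pmf \<Rightarrow> 'a \<Rightarrow> real" where
  "rho lt p x = ptilde lt p x / (1 - pmf p x)"

text \<open>The function H(x,m,r). Binomial terms with r - j < 0 vanish (convention), hence the guard j \<le> r;
  when r - j > m - e the binomial coefficient is already 0.\<close>
definition H :: "('a \<times> 'a) set \<Rightarrow> 'a pmf \<Rightarrow> 'a \<Rightarrow> nat \<Rightarrow> nat \<Rightarrow> real" where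
  "H lt p x m r =
    (if 0 < pmf p x \<and> pmf p x < 1 then
       (\<Sum>e=0..m.
          (\<Sum>j=0..e. (if j \<le> r then
               real ((m - e) choose (r - j)) * rho lt p x ^ (r - j)
                 * (1 - rho lt p x) ^ ((m - e) - (r - j)) * (1 / real (e + 1))
             else 0))
          * real (m choose e) * pmf p x ^ e * (1 - pmf p x) ^ (m - e))
     else if pmf p x = 0 then
       real (m choose r) * ptilde lt p x ^ r * (1 - ptilde lt p x) ^ (m - r)
     else 1 / real (m + 1))"

definition rankR :: "('a \<times> 'a) set \<Rightarrow> nat \<Rightarrow> (nat \<Rightarrow> 'a) \<Rightarrow> (nat \<Rightarrow> real) \<Rightarrow> nat" where
  "rankR lt m xs us = (\<Sum>j=1..m. (if (xs j, xs 0) \<in> lt then 1 else 0)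
                               + (if xs j = xs 0 \<and> us j < us 0 then 1 else 0))"

definition joint :: "'a pmf \<Rightarrow> 'a pmf \<Rightarrow> nat \<Rightarrow> ((nat \<Rightarrow> 'a) \<times> (nat \<Rightarrow> real)) measure" where
  "joint p q m =
     (\<Pi>\<^sub>M j\<in>{0..m}. (if j = 0 then measure_pmf q else measure_pmf p))
       \<Otimes>\<^sub>M (\<Pi>\<^sub>M j\<in>{0..m}. uniform_measure lborel {0<..<1::real})"

end

theory Submission
  imports Defs
begin

(* Condition on X_0 = x and U_0 = t. The j-th summand of R is then the indicator of the event
   "X_j \<prec> x, or X_j = x and U_j < t"; these events are independent, each of probability
   s = ptilde(x) + p(x) t, so R is binomial with parameters m and s. It remains to integrate the
   binomial probability over t \<in> (0,1). Writing ptilde(x) = (1 - p(x)) \<rho>(x), both powers in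
   C(m,r) s^r (1 - s)^(m-r) split into a part carrying (1 - p(x)) and a part carrying p(x) t or
   p(x) (1 - t); expanding them leaves Bernstein polynomials in t, each of integral 1/(e+1). Finally average over X_0 = x \<sim> q. *)

section \<open>Counting subsets and regrouping binomial expansions\<close>

lemma indicator_sum_eq_sum_subsets:
  fixes b :: "'i \<Rightarrow> nat"
  assumes "finite A" and "\<And>j. j \<in> A \<Longrightarrow> b j \<le> 1"
  shows "(if (\<Sum>j\<in>A. b j) = r then 1 else 0 :: real) =
     (\<Sum>S | S \<subseteq> A \<and> card S = r. \<Prod>j\<in>A. if j \<in> S then real (b j) else 1 - real (b j))"
proof -
  define S0 where "S0 = {j\<in>A. b j = 1}"
  have b01: "b j = 0 \<or> b j = 1" if "j \<in> A" for j
    using assms(2)[OF that] by linarith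
  have "(\<Sum>j\<in>A. b j) = (\<Sum>j\<in>A. if j \<in> S0 then 1 else 0)"
    by (rule sum.cong) (use b01 in \<open>auto simp: S0_def\<close>)
  then have sum_b: "(\<Sum>j\<in>A. b j) = card S0"
    using \<open>finite A\<close> unfolding S0_def by (simp add: sum.If_cases Int_def)
  have "(\<Prod>j\<in>A. if j \<in> S then real (b j) else 1 - real (b j)) = (if S = S0 then 1 else 0)"
    if S: "S \<subseteq> A" for S
  proof (cases "S = S0")
    case True
    have "(\<Prod>j\<in>A. if j \<in> S then real (b j) else 1 - real (b j)) = 1"
      using b01 True by (intro prod.neutral ballI) (fastforce simp: S0_def)
    then show ?thesis
      using True by simp
  next
    case False
    then obtain j where j: "j \<in> A" "(j \<in> S) \<noteq> (j \<in> S0)"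
      using S unfolding S0_def by blast
    have "(if j \<in> S then real (b j) else 1 - real (b j)) = 0"
      using j b01[OF j(1)] unfolding S0_def by auto
    then have "(\<Prod>j\<in>A. if j \<in> S then real (b j) else 1 - real (b j)) = 0"
      using j(1) by (intro prod_zero[OF \<open>finite A\<close>]) blast
    then show ?thesis
      using False by simp
  qed
  then have "(\<Sum>S | S \<subseteq> A \<and> card S = r. \<Prod>j\<in>A. if j \<in> S then real (b j) else 1 - real (b j))
      = (\<Sum>S | S \<subseteq> A \<and> card S = r. if S = S0 then 1 else 0)"
    by (intro sum.cong) auto
  also have "\<dots> = (if card S0 = r then 1 else 0)"
    using \<open>finite A\<close> unfolding S0_def by (simp add: sum.delta')
  finally show ?thesis
    using sum_b by simp
qed

lemma sum_card_subsets_prod_const: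
  fixes s :: real
  assumes "finite A"
  shows "(\<Sum>S | S \<subseteq> A \<and> card S = r. \<Prod>j\<in>A. if j \<in> S then s else 1 - s) =
     real (card A choose r) * s ^ r * (1 - s) ^ (card A - r)"
proof -
  have "(\<Prod>j\<in>A. if j \<in> S then s else 1 - s) = s ^ r * (1 - s) ^ (card A - r)"
    if "S \<subseteq> A" "card S = r" for S
  proof -
    have "(\<Prod>j\<in>A. if j \<in> S then s else 1 - s) = s ^ card S * (1 - s) ^ card (A - S)"
      using \<open>finite A\<close> that(1) by (simp add: prod.If_cases Int_absorb1 Diff_eq[symmetric] Int_commute)
    then show ?thesis
      using that \<open>finite A\<close> by (simp add: card_Diff_subset finite_subset)
  qed
  then have "(\<Sum>S | S \<subseteq> A \<and> card S = r. \<Prod>j\<in>A. if j \<in> S then s else 1 - s) =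
      real (card {S. S \<subseteq> A \<and> card S = r}) * (s ^ r * (1 - s) ^ (card A - r))"
    by simp
  then show ?thesis
    using n_subsets[OF \<open>finite A\<close>] by simp
qed

lemma sum_sum_diagonal_reindex:
  fixes g :: "nat \<Rightarrow> nat \<Rightarrow> 'a::comm_monoid_add"
  shows "(\<Sum>i\<le>r. \<Sum>l\<le>k. g (i + l) i) =
    (\<Sum>e\<le>r + k. \<Sum>j\<le>e. if j \<le> r \<and> e - j \<le> k then g e j else 0)"
proof -
  let ?P = "\<lambda>x. snd x \<le> r \<and> fst x - snd x \<le> k"
  have img: "(\<lambda>(i, l). (i + l, i)) ` ({..r} \<times> {..k}) = {x \<in> Sigma {..r + k} (\<lambda>e. {..e}). ?P x}"
  proof (intro equalityI subsetI)
    fix x assume "x \<in> {x \<in> Sigma {..r + k} (\<lambda>e. {..e}). ?P x}"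
    then obtain e j where "x = (e, j)" "j \<le> e" "j \<le> r" "e - j \<le> k" by auto
    then show "x \<in> (\<lambda>(i, l). (i + l, i)) ` ({..r} \<times> {..k})"
      by (intro image_eqI[where x = "(j, e - j)"]) auto
  qed auto
  have "(\<Sum>i\<le>r. \<Sum>l\<le>k. g (i + l) i) = (\<Sum>x\<in>(\<lambda>(i, l). (i + l, i)) ` ({..r} \<times> {..k}). g (fst x) (snd x))"
    by (subst sum.reindex) (auto simp: inj_on_def sum.cartesian_product split_def)
  also have "\<dots> = (\<Sum>x\<in>Sigma {..r + k} (\<lambda>e. {..e}). if ?P x then g (fst x) (snd x) else 0)"
    unfolding img by (simp add: sum.inter_filter)
  finally show ?thesis
    by (simp add: sum.Sigma split_def)
qed

lemma choose_mult_regroup: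
  assumes "i \<le> r" "l \<le> m - r" "r \<le> m"
  shows "real (m choose r) * real (r choose i) * real ((m - r) choose l) =
    real (m choose (i + l)) * real ((m - (i + l)) choose (r - i)) * real ((i + l) choose i)"
proof -
  obtain a b where a: "r = i + a" and b: "m - r = l + b"
    using assms(1,2) le_Suc_ex by metis
  then have "m = i + a + l + b" "m - (i + l) = a + b" "r - i = a"
    using assms(3) by linarith+
  then show ?thesis
    unfolding b by (subst (1 2 3 4 5 6) binomial_fact) (use a in simp_all)
qed

lemma binomial_power_product_regroup:
  fixes A B C D :: real
  assumes "r \<le> m"
  shows "real (m choose r) * (A + B) ^ r * (C + D) ^ (m - r) =
    (\<Sum>e=0..m. \<Sum>j=0..e. if j \<le> r then real (m choose e) * real ((m - e) choose (r - j))
        * real (e choose j) * A ^ (r - j) * C ^ (m - e - (r - j)) * B ^ j * D ^ (e - j) else 0)"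
proof -
  define F where "F e j = real (m choose e) * real ((m - e) choose (r - j))
        * real (e choose j) * A ^ (r - j) * C ^ (m - e - (r - j)) * B ^ j * D ^ (e - j)" for e j
  have "(A + B) ^ r = (\<Sum>i\<le>r. real (r choose i) * B ^ i * A ^ (r - i))"
    and "(C + D) ^ (m - r) = (\<Sum>l\<le>m - r. real ((m - r) choose l) * D ^ l * C ^ (m - r - l))"
    using binomial_ring[of B A r] binomial_ring[of D C "m - r"] by (simp_all add: add.commute)
  then have "real (m choose r) * (A + B) ^ r * (C + D) ^ (m - r) =
      real (m choose r) * ((\<Sum>i\<le>r. real (r choose i) * B ^ i * A ^ (r - i)) *
        (\<Sum>l\<le>m - r. real ((m - r) choose l) * D ^ l * C ^ (m - r - l)))"
    by simp
  also have "\<dots> = (\<Sum>i\<le>r. \<Sum>l\<le>m - r. real (m choose r) *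
      ((real (r choose i) * B ^ i * A ^ (r - i)) * (real ((m - r) choose l) * D ^ l * C ^ (m - r - l))))"
    by (subst sum_product) (simp only: sum_distrib_left)
  also have "\<dots> = (\<Sum>i\<le>r. \<Sum>l\<le>m - r. F (i + l) i)"
  proof (intro sum.cong refl)
    fix i l assume "i \<in> {..r}" "l \<in> {..m - r}"
    then have il: "i \<le> r" "l \<le> m - r" by auto
    then have "m - (i + l) - (r - i) = m - r - l"
      using assms by simp
    then show "real (m choose r) * ((real (r choose i) * B ^ i * A ^ (r - i)) *
        (real ((m - r) choose l) * D ^ l * C ^ (m - r - l))) = F (i + l) i"
      unfolding F_def using choose_mult_regroup[OF il assms] by (simp add: ac_simps)
  qed
  also have "\<dots> = (\<Sum>e\<le>m. \<Sum>j\<le>e. if j \<le> r \<and> e - j \<le> m - r then F e j else 0)"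
    using sum_sum_diagonal_reindex[where g = F and r = r and k = "m - r"] assms by simp
  also have "\<dots> = (\<Sum>e\<le>m. \<Sum>j\<le>e. if j \<le> r then F e j else 0)"
    by (intro sum.cong refl) (auto simp: F_def)
  finally show ?thesis
    unfolding F_def atLeast0AtMost .
qed

section \<open>Integrals over the unit interval\<close>

lemma has_integral_Bernstein:
  assumes "j \<le> e"
  shows "((\<lambda>t::real. real (e choose j) * (t ^ j * (1 - t) ^ (e - j))) has_integral 1 / real (e + 1)) {0<..<1}"
proof -
  have "((\<lambda>t::real. t powr (real (j + 1) - 1) * (1 - t) powr (real (e - j + 1) - 1))
      has_integral Beta (real (j + 1)) (real (e - j + 1))) {0<..<1}"
    using has_integral_Beta_real[of "real (j + 1)" "real (e - j + 1)"] by (simp add: has_integral_Icc_iff_Ioo)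
  then have "((\<lambda>t::real. t ^ j * (1 - t) ^ (e - j)) has_integral Beta (real (j + 1)) (real (e - j + 1))) {0<..<1}"
    by (rule has_integral_eq[rotated]) (auto simp: powr_realpow)
  moreover have "Beta (real (j + 1)) (real (e - j + 1)) = fact j * fact (e - j) / fact (e + 1)"
  proof -
    have "Gamma (real (j + 1)) = fact j" "Gamma (real (e - j + 1)) = fact (e - j)"
      and "Gamma (real (j + 1) + real (e - j + 1)) = fact (e + 1)"
      using Gamma_fact[where 'a = real, of j] Gamma_fact[where 'a = real, of "e - j"]
        Gamma_fact[where 'a = real, of "e + 1"] assms by (simp_all add: add.commute)
    then show ?thesis
      by (simp add: Beta_def)
  qed
  moreover have "real (e choose j) * (fact j * fact (e - j) / fact (e + 1)) = 1 / real (e + 1)"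
  proof -
    have "real (e choose j) * (fact j * fact (e - j)) = fact e"
      using arg_cong[OF binomial_fact_lemma[OF assms], of real] by (simp add: ac_simps)
    then have "real (e choose j) * (fact j * fact (e - j) / fact (e + 1)) = fact e / fact (e + 1)"
      by (simp only: times_divide_eq_right)
    then show ?thesis
      by simp
  qed
  ultimately show ?thesis
    using has_integral_mult_right[where c = "real (e choose j)"] by metis
qed

lemma has_integral_binomial_affine:
  fixes a b :: real
  assumes "b \<noteq> 1" and "r \<le> m"
  defines "\<rho> \<equiv> a / (1 - b)"
  shows "((\<lambda>t. real (m choose r) * (a + b * t) ^ r * (1 - (a + b * t)) ^ (m - r)) has_integral
    (\<Sum>e=0..m. (\<Sum>j=0..e. if j \<le> r then real ((m - e) choose (r - j)) * \<rho> ^ (r - j)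
        * (1 - \<rho>) ^ (m - e - (r - j)) * (1 / real (e + 1)) else 0)
      * real (m choose e) * b ^ e * (1 - b) ^ (m - e))) {0<..<1}"
proof -
  define K where "K e j = (if j \<le> r then real ((m - e) choose (r - j)) * \<rho> ^ (r - j)
      * (1 - \<rho>) ^ (m - e - (r - j)) else 0) * real (m choose e) * b ^ e * (1 - b) ^ (m - e)" for e j
  have a: "a = (1 - b) * \<rho>" and c: "1 - a - b = (1 - b) * (1 - \<rho>)"
    using assms(1) unfolding \<rho>_def by (simp_all add: field_simps)
  have summand: "(if j \<le> r then real (m choose e) * real ((m - e) choose (r - j)) * real (e choose j)
      * ((1 - b) * \<rho>) ^ (r - j) * ((1 - b) * (1 - \<rho>)) ^ (m - e - (r - j)) * (b * t) ^ j
      * (b * (1 - t)) ^ (e - j) else 0)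
    = K e j * (real (e choose j) * (t ^ j * (1 - t) ^ (e - j)))"
    if "j \<le> e" for e j t
  proof (cases "j \<le> r \<and> r - j \<le> m - e")
    case True
    have "b ^ j * b ^ (e - j) = b ^ e"
      using that by (simp flip: power_add)
    moreover have "(1 - b) ^ (r - j) * (1 - b) ^ (m - e - (r - j)) = (1 - b) ^ (m - e)"
      using True by (metis le_add_diff_inverse power_add)
    moreover have "real (m choose e) * real ((m - e) choose (r - j)) * real (e choose j) * ((1 - b) * \<rho>) ^ (r - j)
      * ((1 - b) * (1 - \<rho>)) ^ (m - e - (r - j)) * (b * t) ^ j * (b * (1 - t)) ^ (e - j)
      = real ((m - e) choose (r - j)) * \<rho> ^ (r - j) * (1 - \<rho>) ^ (m - e - (r - j)) * real (m choose e)
        * (b ^ j * b ^ (e - j)) * ((1 - b) ^ (r - j) * (1 - b) ^ (m - e - (r - j)))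
        * (real (e choose j) * (t ^ j * (1 - t) ^ (e - j)))"
      by (simp add: power_mult_distrib ac_simps)
    ultimately show ?thesis
      using True by (simp add: K_def)
  qed (auto simp: K_def)
  have integrand: "real (m choose r) * (a + b * t) ^ r * (1 - (a + b * t)) ^ (m - r) =
      (\<Sum>e=0..m. \<Sum>j=0..e. K e j * (real (e choose j) * (t ^ j * (1 - t) ^ (e - j))))" for t
  proof -
    have "1 - (a + b * t) = (1 - b) * (1 - \<rho>) + b * (1 - t)"
      using c by (simp add: algebra_simps)
    then have "real (m choose r) * (a + b * t) ^ r * (1 - (a + b * t)) ^ (m - r) =
        real (m choose r) * ((1 - b) * \<rho> + b * t) ^ r * ((1 - b) * (1 - \<rho>) + b * (1 - t)) ^ (m - r)"
      by (simp add: a[symmetric])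
    also have "\<dots> = (\<Sum>e=0..m. \<Sum>j=0..e. K e j * (real (e choose j) * (t ^ j * (1 - t) ^ (e - j))))"
      unfolding binomial_power_product_regroup[OF assms(2)]
      by (intro sum.cong refl summand) simp
    finally show ?thesis .
  qed
  have "((\<lambda>t. \<Sum>e=0..m. \<Sum>j=0..e. K e j * (real (e choose j) * (t ^ j * (1 - t) ^ (e - j))))
      has_integral (\<Sum>e=0..m. \<Sum>j=0..e. K e j * (1 / real (e + 1)))) {0<..<1}"
    by (intro has_integral_sum has_integral_mult_right has_integral_Bernstein finite_atLeastAtMost) auto
  moreover have "(\<Sum>e=0..m. \<Sum>j=0..e. K e j * (1 / real (e + 1))) =
    (\<Sum>e=0..m. (\<Sum>j=0..e. if j \<le> r then real ((m - e) choose (r - j)) * \<rho> ^ (r - j)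
        * (1 - \<rho>) ^ (m - e - (r - j)) * (1 / real (e + 1)) else 0)
      * real (m choose e) * b ^ e * (1 - b) ^ (m - e))"
    unfolding K_def sum_distrib_right by (intro sum.cong refl) simp
  ultimately show ?thesis
    unfolding integrand by simp
qed

lemma sum_prod_if_compl_ennreal:
  assumes "\<And>j. j \<in> I \<Longrightarrow> 0 \<le> f j \<and> f j \<le> 1"
  shows "(\<Sum>S\<in>\<S>. \<Prod>j\<in>I. ennreal (if j \<in> S then f j else 1 - f j)) =
    ennreal (\<Sum>S\<in>\<S>. \<Prod>j\<in>I. if j \<in> S then f j else 1 - f j)"
  using assms by (simp add: prod_ennreal sum_ennreal prod_nonneg)

lemma (in prob_space) integral_affine_indicator:
  assumes "A \<in> events"
  shows "(\<integral>u. a + b * indicator A u \<partial>M) = a + b * prob A"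
  using assms by (subst Bochner_Integration.integral_add) (auto simp: prob_space less_top[symmetric])

lemma (in prob_space) nn_integral_if_compl:
  assumes "f \<in> borel_measurable M" and "\<And>x. x \<in> space M \<Longrightarrow> 0 \<le> f x \<and> f x \<le> 1"
  shows "(\<integral>\<^sup>+x. ennreal (if c then f x else 1 - f x) \<partial>M) =
    ennreal (if c then expectation f else 1 - expectation f)"
proof -
  have "integrable M f"
    using assms by (intro integrable_const_bound[where B = 1]) auto
  moreover have "integrable M (\<lambda>x. 1 - f x)"
    using assms by (intro integrable_const_bound[where B = 1]) auto
  ultimately show ?thesis
    using assms(2) by (cases c) (simp_all add: nn_integral_eq_integral prob_space)
qed

lemma finite_product_prob_spaceI:
  assumes "finite I" and "\<And>i. prob_space (M i)"
  shows "finite_product_prob_space M I"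
  using assms by (intro finite_product_prob_space.intro finite_product_sigma_finite.intro product_prob_spaceI
      product_sigma_finite.intro finite_product_sigma_finite_axioms.intro prob_space_imp_sigma_finite)

lemma (in finite_product_prob_space) nn_integral_PiM_sum_prod_if_compl:
  assumes "\<And>j. j \<in> I \<Longrightarrow> f j \<in> borel_measurable (M j)"
    and "\<And>j x. j \<in> I \<Longrightarrow> x \<in> space (M j) \<Longrightarrow> 0 \<le> f j x \<and> f j x \<le> 1"
  shows "(\<integral>\<^sup>+x. (\<Sum>S\<in>\<S>. \<Prod>j\<in>I. ennreal (if j \<in> S then f j (x j) else 1 - f j (x j))) \<partial>Pi\<^sub>M I M) =
    (\<Sum>S\<in>\<S>. \<Prod>j\<in>I. ennreal (if j \<in> S then integral\<^sup>L (M j) (f j) else 1 - integral\<^sup>L (M j) (f j)))"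
proof -
  have meas: "(\<lambda>y. ennreal (if j \<in> S then f j y else 1 - f j y)) \<in> borel_measurable (M j)"
    if "j \<in> I" for S j
    using assms(1)[OF that] by measurable
  have "(\<integral>\<^sup>+x. (\<Sum>S\<in>\<S>. \<Prod>j\<in>I. ennreal (if j \<in> S then f j (x j) else 1 - f j (x j))) \<partial>Pi\<^sub>M I M) =
      (\<Sum>S\<in>\<S>. \<integral>\<^sup>+x. (\<Prod>j\<in>I. ennreal (if j \<in> S then f j (x j) else 1 - f j (x j))) \<partial>Pi\<^sub>M I M)"
  proof (rule nn_integral_sum)
    fix S
    show "(\<lambda>x. \<Prod>j\<in>I. ennreal (if j \<in> S then f j (x j) else 1 - f j (x j))) \<in> borel_measurable (Pi\<^sub>M I M)"
      using meas by (intro borel_measurable_prod_ennreal measurable_compose[OF measurable_component_singleton]) auto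
  qed
  also have "\<dots> = (\<Sum>S\<in>\<S>. \<Prod>j\<in>I. \<integral>\<^sup>+y. ennreal (if j \<in> S then f j y else 1 - f j y) \<partial>M j)"
    using meas by (intro sum.cong refl product_nn_integral_prod[OF finite_index]) auto
  also have "\<dots> = (\<Sum>S\<in>\<S>. \<Prod>j\<in>I. ennreal (if j \<in> S then integral\<^sup>L (M j) (f j) else 1 - integral\<^sup>L (M j) (f j)))"
    using assms by (intro sum.cong prod.cong refl prob_space.nn_integral_if_compl[OF prob_space]) auto
  finally show ?thesis .
qed

lemma nn_integral_pair_PiM_insert:
  fixes M :: "'i \<Rightarrow> 'a measure" and N :: "'i \<Rightarrow> 'b measure"
  assumes M: "product_sigma_finite M" and N: "product_sigma_finite N"
    and "finite I" "i \<notin> I"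
    and f: "f \<in> borel_measurable (Pi\<^sub>M (insert i I) M \<Otimes>\<^sub>M Pi\<^sub>M (insert i I) N)"
  shows "(\<integral>\<^sup>+\<omega>. f \<omega> \<partial>(Pi\<^sub>M (insert i I) M \<Otimes>\<^sub>M Pi\<^sub>M (insert i I) N)) =
    (\<integral>\<^sup>+x. \<integral>\<^sup>+t. \<integral>\<^sup>+us. \<integral>\<^sup>+xs. f (xs(i := x), us(i := t)) \<partial>Pi\<^sub>M I M \<partial>Pi\<^sub>M I N \<partial>N i \<partial>M i)"
proof -
  interpret M: product_sigma_finite M by (rule M)
  interpret N: product_sigma_finite N by (rule N)
  interpret MI: sigma_finite_measure "Pi\<^sub>M I M" by (rule M.sigma_finite) fact
  interpret Ni: sigma_finite_measure "Pi\<^sub>M (insert i I) N" by (rule N.sigma_finite) (use \<open>finite I\<close> in simp)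
  interpret MI_Ni: pair_sigma_finite "Pi\<^sub>M I M" "Pi\<^sub>M (insert i I) N" ..
  have upd: "(\<lambda>(xs, us). f (xs(i := x), us)) \<in> borel_measurable (Pi\<^sub>M I M \<Otimes>\<^sub>M Pi\<^sub>M (insert i I) N)"
    if "x \<in> space (M i)" for x
  proof -
    have "(\<lambda>\<omega>. ((fst \<omega>)(i := x), snd \<omega>)) \<in>
        measurable (Pi\<^sub>M I M \<Otimes>\<^sub>M Pi\<^sub>M (insert i I) N) (Pi\<^sub>M (insert i I) M \<Otimes>\<^sub>M Pi\<^sub>M (insert i I) N)"
      using that by (intro measurable_Pair measurable_fun_upd[where J = I]) auto
    then show ?thesis
      using measurable_compose[OF _ f] by (simp add: split_beta')
  qed
  have "(\<integral>\<^sup>+\<omega>. f \<omega> \<partial>(Pi\<^sub>M (insert i I) M \<Otimes>\<^sub>M Pi\<^sub>M (insert i I) N)) =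
      (\<integral>\<^sup>+xs. \<integral>\<^sup>+us. f (xs, us) \<partial>Pi\<^sub>M (insert i I) N \<partial>Pi\<^sub>M (insert i I) M)"
    by (rule Ni.nn_integral_fst[OF f, symmetric])
  also have "\<dots> = (\<integral>\<^sup>+x. \<integral>\<^sup>+xs. \<integral>\<^sup>+us. f (xs(i := x), us) \<partial>Pi\<^sub>M (insert i I) N \<partial>Pi\<^sub>M I M \<partial>M i)"
    using Ni.borel_measurable_nn_integral_fst[OF f] \<open>finite I\<close> \<open>i \<notin> I\<close>
    by (rule M.product_nn_integral_insert_rev[rotated 2])
  also have "\<dots> = (\<integral>\<^sup>+x. \<integral>\<^sup>+us. \<integral>\<^sup>+xs. f (xs(i := x), us) \<partial>Pi\<^sub>M I M \<partial>Pi\<^sub>M (insert i I) N \<partial>M i)"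
    using MI_Ni.Fubini'[OF upd] by (intro nn_integral_cong) simp
  also have "\<dots> = (\<integral>\<^sup>+x. \<integral>\<^sup>+t. \<integral>\<^sup>+us. \<integral>\<^sup>+xs. f (xs(i := x), us(i := t)) \<partial>Pi\<^sub>M I M \<partial>Pi\<^sub>M I N \<partial>N i \<partial>M i)"
  proof (intro nn_integral_cong)
    fix x assume "x \<in> space (M i)"
    have "(\<lambda>us. \<integral>\<^sup>+xs. f (xs(i := x), us) \<partial>Pi\<^sub>M I M) \<in> borel_measurable (Pi\<^sub>M (insert i I) N)"
      using MI.borel_measurable_nn_integral_fst[OF measurable_pair_swap[OF upd[OF \<open>x \<in> space (M i)\<close>]]]
      by simp
    then show "(\<integral>\<^sup>+us. \<integral>\<^sup>+xs. f (xs(i := x), us) \<partial>Pi\<^sub>M I M \<partial>Pi\<^sub>M (insert i I) N) =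
        (\<integral>\<^sup>+t. \<integral>\<^sup>+us. \<integral>\<^sup>+xs. f (xs(i := x), us(i := t)) \<partial>Pi\<^sub>M I M \<partial>Pi\<^sub>M I N \<partial>N i)"
      using \<open>finite I\<close> \<open>i \<notin> I\<close> by (intro N.product_nn_integral_insert_rev)
  qed
  finally show ?thesis .
qed

lemma measure_eq_infsum_pmf:
  assumes "finite_measure M" and "emeasure M A = (\<integral>\<^sup>+x. ennreal (h x) \<partial>measure_pmf q)"
    and "\<And>x. 0 \<le> h x"
  shows "measure M A = (\<Sum>\<^sub>\<infinity>x. h x * pmf q x)"
proof -
  have emeasure_eq: "emeasure M A = (\<integral>\<^sup>+x. ennreal (h x * pmf q x) \<partial>count_space UNIV)"
    unfolding assms(2) nn_integral_measure_pmf using assms(3)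
    by (intro nn_integral_cong) (simp add: ennreal_mult mult.commute)
  moreover have "emeasure M A = ennreal (measure M A)"
    using assms(1) by (rule finite_measure.emeasure_eq_measure)
  ultimately have "integrable (count_space UNIV) (\<lambda>x. h x * pmf q x)"
    using assms(3) by (intro integrableI_nn_integral_finite[where x = "measure M A"]) auto
  then have summable: "Infinite_Set_Sum.abs_summable_on (\<lambda>x. h x * pmf q x) UNIV"
    by (simp add: abs_summable_on_def)
  have "ennreal (measure M A) = ennreal (infsetsum (\<lambda>x. h x * pmf q x) UNIV)"
    using emeasure_eq \<open>emeasure M A = ennreal (measure M A)\<close> assms(3)
    by (simp add: nn_integral_conv_infsetsum[OF summable])
  then have "measure M A = infsetsum (\<lambda>x. h x * pmf q x) UNIV"
    using assms(3) by (subst (asm) ennreal_inj) (auto intro!: infsetsum_nonneg)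
  also have "\<dots> = (\<Sum>\<^sub>\<infinity>x. h x * pmf q x)"
    using summable by (rule infsetsum_infsum)
  finally show ?thesis .
qed

abbreviation uniform01 :: "real measure" where
  "uniform01 \<equiv> uniform_measure lborel {0<..<1}"

lemma prob_space_uniform01: "prob_space uniform01"
  by (rule prob_space_uniform_measure) simp_all

lemma measure_uniform01_lessThan:
  assumes "0 \<le> t" "t \<le> 1"
  shows "measure uniform01 {..<t} = t"
proof -
  have "{0<..<1} \<inter> {..<t} = {0<..<t}"
    using assms by auto
  then show ?thesis
    using assms by (simp add: measure_uniform_measure)
qed

lemma nn_integral_uniform01_eq_integral:
  assumes "f \<in> borel_measurable borel" "\<And>t. t \<in> {0<..<1} \<Longrightarrow> 0 \<le> f t"
    and "(f has_integral I) {0<..<1}"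
  shows "(\<integral>\<^sup>+t. ennreal (f t) \<partial>uniform01) = ennreal I"
proof -
  have "(\<integral>\<^sup>+t. ennreal (f t) \<partial>uniform01) = (\<integral>\<^sup>+t\<in>{0<..<1}. ennreal (f t) \<partial>lborel) / emeasure lborel {0<..<1::real}"
    using assms(1) by (intro nn_integral_uniform_measure) auto
  also have "(\<integral>\<^sup>+t\<in>{0<..<1}. ennreal (f t) \<partial>lborel) = ennreal I"
    using assms(2,3) by (rule nn_integral_has_integral_lebesgue')
  finally show ?thesis
    by (simp add: divide_ennreal_def)
qed

section \<open>The distribution of the rank\<close>

lemma ptilde_eq_measure: "ptilde lt p x = measure (measure_pmf p) {y. (y, x) \<in> lt}"
  unfolding ptilde_def measure_pmf_conv_infsetsum
  by (rule infsetsum_infsum[symmetric]) (rule pmf_abs_summable)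

lemma ptilde_nonneg: "0 \<le> ptilde lt p x"
  by (simp add: ptilde_eq_measure)

lemma measure_pmf_below_or_tie:
  assumes "(x, x) \<notin> lt"
  shows "measure (measure_pmf p) {y. (y, x) \<in> lt \<or> y = x \<and> c} = ptilde lt p x + (if c then pmf p x else 0)"
proof (cases c)
  case True
  then have "{y. (y, x) \<in> lt \<or> y = x \<and> c} = {y. (y, x) \<in> lt} \<union> {x}"
    by auto
  then show ?thesis
    using assms unfolding ptilde_eq_measure
    by (simp only:) (subst measure_pmf.finite_measure_Union, auto simp: measure_pmf_single)
qed (simp add: ptilde_eq_measure)

lemma ptilde_add_pmf_le_1:
  assumes "(x, x) \<notin> lt"
  shows "ptilde lt p x + pmf p x \<le> 1"
  using measure_pmf_below_or_tie[OF assms, of p True] by (metis measure_pmf.prob_le_1)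

lemma ptilde_add_pmf_mult_bounds:
  assumes "(x, x) \<notin> lt" and "0 \<le> t" "t \<le> 1"
  shows "0 \<le> ptilde lt p x + pmf p x * t" "ptilde lt p x + pmf p x * t \<le> 1"
proof -
  have "0 \<le> pmf p x * t" "pmf p x * t \<le> pmf p x"
    using assms(2,3) by (simp_all add: mult_left_le)
  then show "0 \<le> ptilde lt p x + pmf p x * t" "ptilde lt p x + pmf p x * t \<le> 1"
    using ptilde_nonneg[of lt p x] ptilde_add_pmf_le_1[OF assms(1), of p] by linarith+
qed

lemma H_has_integral:
  assumes "(x, x) \<notin> lt" and "r \<le> m"
  shows "((\<lambda>t. real (m choose r) * (ptilde lt p x + pmf p x * t) ^ r
      * (1 - (ptilde lt p x + pmf p x * t)) ^ (m - r)) has_integral H lt p x m r) {0<..<1}"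
proof -
  consider "pmf p x = 0" | "0 < pmf p x \<and> pmf p x < 1" | "pmf p x = 1"
    using pmf_nonneg[of p x] pmf_le_1[of p x] by linarith
  then show ?thesis
  proof cases
    case 1
    then show ?thesis
      using has_integral_const_real[of "real (m choose r) * ptilde lt p x ^ r * (1 - ptilde lt p x) ^ (m - r)" 0 1]
      by (simp add: H_def has_integral_Icc_iff_Ioo)
  next
    case 2
    then show ?thesis
      unfolding H_def rho_def using has_integral_binomial_affine[OF _ assms(2), of "pmf p x" "ptilde lt p x"]
      by simp
  next
    case 3
    then have "ptilde lt p x = 0"
      using ptilde_nonneg[of lt p x] ptilde_add_pmf_le_1[OF assms(1), of p] by linarith
    then show ?thesis
      using 3 has_integral_Bernstein[OF assms(2)] by (simp add: H_def mult.assoc)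
  qed
qed

lemma H_nonneg:
  assumes "(x, x) \<notin> lt" and "r \<le> m"
  shows "0 \<le> H lt p x m r"
proof (rule has_integral_nonneg[OF H_has_integral[OF assms]])
  fix t :: real assume "t \<in> {0<..<1}"
  then show "0 \<le> real (m choose r) * (ptilde lt p x + pmf p x * t) ^ r * (1 - (ptilde lt p x + pmf p x * t)) ^ (m - r)"
    using ptilde_add_pmf_mult_bounds[OF assms(1), of t p] by simp
qed

lemma measurable_joint_fst_component:
  assumes "j \<le> m"
  shows "(\<lambda>\<omega>. fst \<omega> j) \<in> joint p q m \<rightarrow>\<^sub>M count_space UNIV"
proof -
  have "(\<lambda>\<omega>. fst \<omega> j) \<in> joint p q m \<rightarrow>\<^sub>M (if j = 0 then measure_pmf q else measure_pmf p)"
    unfolding joint_def using assms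
    by (intro measurable_compose[OF measurable_fst measurable_component_singleton]) auto
  then show ?thesis
    by (cases "j = 0") auto
qed

lemma measurable_joint_snd_component:
  assumes "j \<le> m"
  shows "(\<lambda>\<omega>. snd \<omega> j) \<in> borel_measurable (joint p q m)"
proof -
  have "(\<lambda>\<omega>. snd \<omega> j) \<in> joint p q m \<rightarrow>\<^sub>M uniform_measure lborel {0<..<1::real}"
    unfolding joint_def using assms
    by (intro measurable_compose[OF measurable_snd measurable_component_singleton]) auto
  then show ?thesis
    by (simp cong: measurable_cong_sets)
qed

lemma pred_rankR_eq:
  fixes lt :: "('a::countable \<times> 'a) set"
  shows "Measurable.pred (joint p q m) (\<lambda>\<omega>. rankR lt m (fst \<omega>) (snd \<omega>) = r)"
proof -
  have [measurable]: "(\<lambda>\<omega>. fst \<omega> j) \<in> joint p q m \<rightarrow>\<^sub>M count_space UNIV"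
    "(\<lambda>\<omega>. snd \<omega> j) \<in> borel_measurable (joint p q m)" if "j \<le> m" for j
    using that by (simp_all add: measurable_joint_fst_component measurable_joint_snd_component)
  show ?thesis
    unfolding rankR_def by measurable
qed

lemma emeasure_joint_rankR:
  fixes lt :: "('a::countable \<times> 'a) set" and p q :: "'a pmf"
  shows "emeasure (joint p q m) {\<omega> \<in> space (joint p q m). rankR lt m (fst \<omega>) (snd \<omega>) = r} =
    (\<integral>\<^sup>+x. \<integral>\<^sup>+t. \<integral>\<^sup>+us. \<integral>\<^sup>+xs. indicator {\<omega>. rankR lt m (fst \<omega>) (snd \<omega>) = r} (xs(0 := x), us(0 := t))
      \<partial>Pi\<^sub>M {1..m} (\<lambda>_. measure_pmf p) \<partial>Pi\<^sub>M {1..m} (\<lambda>_. uniform01) \<partial>uniform01 \<partial>measure_pmf q)"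
proof -
  define MX where "MX j = (if j = 0 then measure_pmf q else measure_pmf p)" for j :: nat
  define R where "R = {\<omega>. rankR lt m (fst \<omega>) (snd \<omega>) = r}"
  have "{0..m} = insert 0 {1..m}"
    by auto
  then have joint: "joint p q m = Pi\<^sub>M (insert 0 {1..m}) MX \<Otimes>\<^sub>M Pi\<^sub>M (insert 0 {1..m}) (\<lambda>_. uniform01)"
    unfolding joint_def MX_def by simp
  have "product_sigma_finite MX" "product_sigma_finite (\<lambda>_. uniform01)"
    unfolding MX_def
    by (auto intro!: product_sigma_finite.intro prob_space_imp_sigma_finite prob_space_uniform01
        simp: measure_pmf.prob_space_axioms)
  moreover have "indicator R \<in> borel_measurable (joint p q m)"
  proof -
    have "indicator {\<omega> \<in> space (joint p q m). rankR lt m (fst \<omega>) (snd \<omega>) = r} \<in> borel_measurable (joint p q m)"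
      by (intro borel_measurable_indicator predE pred_rankR_eq)
    then show ?thesis
      by (rule measurable_cong[THEN iffD1, rotated]) (auto simp: R_def indicator_def)
  qed
  ultimately have "(\<integral>\<^sup>+\<omega>. indicator R \<omega> \<partial>joint p q m) =
      (\<integral>\<^sup>+x. \<integral>\<^sup>+t. \<integral>\<^sup>+us. \<integral>\<^sup>+xs. indicator R (xs(0 := x), us(0 := t))
        \<partial>Pi\<^sub>M {1..m} MX \<partial>Pi\<^sub>M {1..m} (\<lambda>_. uniform01) \<partial>uniform01 \<partial>MX 0)"
    unfolding joint by (intro nn_integral_pair_PiM_insert) auto
  moreover have "Pi\<^sub>M {1..m} MX = Pi\<^sub>M {1..m} (\<lambda>_. measure_pmf p)"
    by (rule PiM_cong) (auto simp: MX_def)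
  moreover have "(\<integral>\<^sup>+\<omega>. indicator R \<omega> \<partial>joint p q m) =
      emeasure (joint p q m) {\<omega> \<in> space (joint p q m). rankR lt m (fst \<omega>) (snd \<omega>) = r}"
    using predE[OF pred_rankR_eq]
    by (subst nn_integral_indicator[symmetric]) (auto intro!: nn_integral_cong simp: R_def indicator_def)
  ultimately show ?thesis
    by (simp add: R_def MX_def)
qed

(* Irreflexivity makes the two indicators in each summand of rankR mutually exclusive. *)
lemma rankR_fun_upd_0:
  assumes "(x, x) \<notin> lt"
  shows "rankR lt m (xs(0 := x)) (us(0 := t)) =
    (\<Sum>j=1..m. if (xs j, x) \<in> lt \<or> xs j = x \<and> us j < t then 1 else 0)"
  unfolding rankR_def using assms by (intro sum.cong refl) auto

lemma nn_integral_rankR_conditional: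
  fixes p :: "'a pmf"
  assumes "(x, x) \<notin> lt" and "0 \<le> t" "t \<le> 1"
  defines "s \<equiv> ptilde lt p x + pmf p x * t"
  shows "(\<integral>\<^sup>+us. \<integral>\<^sup>+xs. indicator {\<omega>. rankR lt m (fst \<omega>) (snd \<omega>) = r} (xs(0 := x), us(0 := t))
      \<partial>Pi\<^sub>M {1..m} (\<lambda>_. measure_pmf p) \<partial>Pi\<^sub>M {1..m} (\<lambda>_. uniform01))
    = ennreal (real (m choose r) * s ^ r * (1 - s) ^ (m - r))"
proof -
  define \<S> where "\<S> = {S. S \<subseteq> {1..m} \<and> card S = r}"
  define below where "below u = {y. (y, x) \<in> lt \<or> y = x \<and> u < t}" for u
  define e where "e u = ptilde lt p x + pmf p x * indicator {..<t} u" for u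
  interpret X: finite_product_prob_space "\<lambda>_. measure_pmf p" "{1..m}"
    by (simp add: finite_product_prob_spaceI measure_pmf.prob_space_axioms)
  interpret U: finite_product_prob_space "\<lambda>_. uniform01" "{1..m}"
    by (simp add: finite_product_prob_spaceI prob_space_uniform01)
  have e_bounds: "0 \<le> e u \<and> e u \<le> 1" for u
    unfolding e_def using ptilde_add_pmf_mult_bounds[OF assms(1), of "indicator {..<t} u" p] by simp
  have pointwise: "indicator {\<omega>. rankR lt m (fst \<omega>) (snd \<omega>) = r} (xs(0 := x), us(0 := t)) =
      (\<Sum>S\<in>\<S>. \<Prod>j\<in>{1..m}. ennreal (if j \<in> S then indicator (below (us j)) (xs j)
        else 1 - indicator (below (us j)) (xs j)))" for xs us
  proof -
    define b where "b j = (if xs j \<in> below (us j) then 1 else 0 :: nat)" for j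
    have "rankR lt m (xs(0 := x)) (us(0 := t)) = (\<Sum>j=1..m. b j)"
      unfolding rankR_fun_upd_0[OF assms(1)] b_def below_def by simp
    then have "indicator {\<omega>. rankR lt m (fst \<omega>) (snd \<omega>) = r} (xs(0 := x), us(0 := t)) =
        ennreal (\<Sum>S\<in>\<S>. \<Prod>j\<in>{1..m}. if j \<in> S then real (b j) else 1 - real (b j))"
      unfolding \<S>_def by (subst indicator_sum_eq_sum_subsets[symmetric]) (auto simp: b_def indicator_def)
    also have "\<dots> = (\<Sum>S\<in>\<S>. \<Prod>j\<in>{1..m}. ennreal (if j \<in> S then indicator (below (us j)) (xs j)
        else 1 - indicator (below (us j)) (xs j)))"
    proof -
      have "real (b j) = indicator (below (us j)) (xs j)" for j
        by (simp add: b_def)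
      then show ?thesis
        by (simp only:) (rule sum_prod_if_compl_ennreal[symmetric], simp)
    qed
    finally show ?thesis .
  qed
  have measure_below: "measure p (below u) = e u" for u
    unfolding below_def e_def using measure_pmf_below_or_tie[OF assms(1)] by simp
  have inner: "(\<integral>\<^sup>+xs. indicator {\<omega>. rankR lt m (fst \<omega>) (snd \<omega>) = r} (xs(0 := x), us(0 := t))
      \<partial>Pi\<^sub>M {1..m} (\<lambda>_. measure_pmf p)) =
    (\<Sum>S\<in>\<S>. \<Prod>j\<in>{1..m}. ennreal (if j \<in> S then e (us j) else 1 - e (us j)))" for us
  proof -
    have "(\<integral>\<^sup>+xs. indicator {\<omega>. rankR lt m (fst \<omega>) (snd \<omega>) = r} (xs(0 := x), us(0 := t))
        \<partial>Pi\<^sub>M {1..m} (\<lambda>_. measure_pmf p)) =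
      (\<Sum>S\<in>\<S>. \<Prod>j\<in>{1..m}. ennreal (if j \<in> S then measure p (below (us j))
        else 1 - measure p (below (us j))))"
      unfolding pointwise
      by (subst X.nn_integral_PiM_sum_prod_if_compl) (auto split: split_indicator cong: if_cong)
    then show ?thesis
      by (simp add: measure_below cong: if_cong)
  qed
  have e_measurable: "e \<in> borel_measurable uniform01"
  proof -
    have "e \<in> borel_measurable borel"
      unfolding e_def by measurable
    then show ?thesis
      by (simp cong: measurable_cong_sets)
  qed
  have integral_e: "integral\<^sup>L uniform01 e = s"
  proof -
    have "integral\<^sup>L uniform01 e = ptilde lt p x + pmf p x * measure uniform01 {..<t}"
      unfolding e_def by (rule prob_space.integral_affine_indicator[OF prob_space_uniform01]) simp
    then show ?thesis
      unfolding measure_uniform01_lessThan[OF assms(2,3)] s_def .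
  qed
  have "(\<integral>\<^sup>+us. \<integral>\<^sup>+xs. indicator {\<omega>. rankR lt m (fst \<omega>) (snd \<omega>) = r} (xs(0 := x), us(0 := t))
      \<partial>Pi\<^sub>M {1..m} (\<lambda>_. measure_pmf p) \<partial>Pi\<^sub>M {1..m} (\<lambda>_. uniform01))
    = (\<integral>\<^sup>+us. (\<Sum>S\<in>\<S>. \<Prod>j\<in>{1..m}. ennreal (if j \<in> S then e (us j) else 1 - e (us j)))
      \<partial>Pi\<^sub>M {1..m} (\<lambda>_. uniform01))"
    unfolding inner ..
  also have "\<dots> = (\<Sum>S\<in>\<S>. \<Prod>j\<in>{1..m}. ennreal (if j \<in> S then s else 1 - s))"
    using e_bounds e_measurable
    by (subst U.nn_integral_PiM_sum_prod_if_compl) (auto simp: integral_e cong: if_cong)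
  also have "\<dots> = ennreal (\<Sum>S\<in>\<S>. \<Prod>j\<in>{1..m}. if j \<in> S then s else 1 - s)"
    using ptilde_add_pmf_mult_bounds[OF assms(1-3)] unfolding s_def by (intro sum_prod_if_compl_ennreal) simp
  also have "\<dots> = ennreal (real (m choose r) * s ^ r * (1 - s) ^ (m - r))"
    using sum_card_subsets_prod_const[where A = "{1..m}" and r = r and s = s] unfolding \<S>_def by simp
  finally show ?thesis .
qed

lemma nn_integral_rankR_conditional_X0:
  assumes "(x, x) \<notin> lt" and "r \<le> m"
  shows "(\<integral>\<^sup>+t. \<integral>\<^sup>+us. \<integral>\<^sup>+xs. indicator {\<omega>. rankR lt m (fst \<omega>) (snd \<omega>) = r} (xs(0 := x), us(0 := t))
      \<partial>Pi\<^sub>M {1..m} (\<lambda>_. measure_pmf p) \<partial>Pi\<^sub>M {1..m} (\<lambda>_. uniform01) \<partial>uniform01) = ennreal (H lt p x m r)"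
proof -
  let ?P = "\<lambda>t. real (m choose r) * (ptilde lt p x + pmf p x * t) ^ r * (1 - (ptilde lt p x + pmf p x * t)) ^ (m - r)"
  have "AE t in uniform01. (\<integral>\<^sup>+us. \<integral>\<^sup>+xs. indicator {\<omega>. rankR lt m (fst \<omega>) (snd \<omega>) = r} (xs(0 := x), us(0 := t))
      \<partial>Pi\<^sub>M {1..m} (\<lambda>_. measure_pmf p) \<partial>Pi\<^sub>M {1..m} (\<lambda>_. uniform01)) = ennreal (?P t)"
    by (rule AE_uniform_measureI) (simp, intro AE_I2 impI nn_integral_rankR_conditional[OF assms(1)], auto)
  then have "(\<integral>\<^sup>+t. \<integral>\<^sup>+us. \<integral>\<^sup>+xs. indicator {\<omega>. rankR lt m (fst \<omega>) (snd \<omega>) = r} (xs(0 := x), us(0 := t))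
      \<partial>Pi\<^sub>M {1..m} (\<lambda>_. measure_pmf p) \<partial>Pi\<^sub>M {1..m} (\<lambda>_. uniform01) \<partial>uniform01) = (\<integral>\<^sup>+t. ennreal (?P t) \<partial>uniform01)"
    by (rule nn_integral_cong_AE)
  also have "\<dots> = ennreal (H lt p x m r)"
  proof (rule nn_integral_uniform01_eq_integral[OF _ _ H_has_integral[OF assms]])
    show "?P \<in> borel_measurable borel"
      by measurable
    fix t :: real assume "t \<in> {0<..<1}"
    then show "0 \<le> ?P t"
      using ptilde_add_pmf_mult_bounds[OF assms(1), of t p] by simp
  qed
  finally show ?thesis .
qed

theorem theorem3p8:
  fixes lt :: "('a::countable \<times> 'a) set" and p q :: "'a pmf" and m r :: nat
  assumes "strict_linear_order_on UNIV lt"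
    and "0 < m"
    and "r \<le> m"
  shows "measure (joint p q m)
           {\<omega> \<in> space (joint p q m). rankR lt m (fst \<omega>) (snd \<omega>) = r}
         = (\<Sum>\<^sub>\<infinity>x. H lt p x m r * pmf q x)"
proof (rule measure_eq_infsum_pmf)
  have irrefl: "(x, x) \<notin> lt" for x
    using assms(1) by (auto simp: strict_linear_order_on_def irrefl_on_def)
  show "finite_measure (joint p q m)"
    unfolding joint_def
    by (intro prob_space.finite_measure prob_space_pair prob_space_PiM)
      (simp_all add: measure_pmf.prob_space_axioms prob_space_uniform01)
  show "0 \<le> H lt p x m r" for x
    using irrefl assms(3) by (rule H_nonneg)
  show "emeasure (joint p q m) {\<omega> \<in> space (joint p q m). rankR lt m (fst \<omega>) (snd \<omega>) = r} =
      (\<integral>\<^sup>+x. ennreal (H lt p x m r) \<partial>measure_pmf q)"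
    unfolding emeasure_joint_rankR
    using nn_integral_rankR_conditional_X0[OF irrefl assms(3)] by (intro nn_integral_cong) simp
qed

end
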